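(* Let $\{S;\tilde w_1,\dots,\tilde w_N;p_1,\dots,p_N\}$ be a DIFS. Let $I\subset\{1,\dots,N\}$ be the set of indices $i$ for which the minimal absorbing set $\mathcal M[\tilde w_i,S]$ exists, and suppose $I\neq\varnothing$. Let $\mathcal A_{\mathcal F}$ be the family of the recurrent communication classes of the associated Markov chain. Then: (a) $|\mathcal A_{\mathcal F}|\le\min_{i\in I}\mathcal M_\#[\tilde w_i,S]$, where $\mathcal M_\#[\tilde w_i,S]$ denotes the number of components of $\mathcal M[\tilde w_i,S]$; (b) if for some $i,j\in I$ one has $\mathcal M[\tilde w_i,S]\subset\mathcal B[\mathcal M_k[\tilde w_j,S]]$ for some component $\mathcal M_k[\tilde w_j,S]$ of $\mathcal M[\tilde w_j,S]$, then $|\mathcal A_{\mathcal F}|\le1$.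
   Context: $\mathcal D^n(\delta)=\{\delta m:m\in\mathbb Z^n\}$ for fixed $\delta>0$; $\mathbb N=\{1,2,\dots\}$. A DIFS $\{S;\tilde w_1,\dots,\tilde w_N;p_1,\dots,p_N\}$ consists of $S\subset\mathcal D^n(\delta)$, maps $\tilde w_i:S\to S$, and functions $p_i:S\to(0,1]$ with $\sum_ip_i(\tilde x)=1$ for every $\tilde x\in S$; its associated Markov chain on $S$ has transition probabilities $P(\tilde x,\tilde y)=\sum_ip_i(\tilde x)\mathbf 1_{\{\tilde y\}}(\tilde w_i(\tilde x))$. Accessibility: $P^k(\tilde x,\tilde y)>0$ for some $k\ge1$; a communication class is a maximal nonempty set of mutually accessible states; a state is recurrent if the chain started there returns to it in finitely many steps a.s.; a recurrent communication class is a communication class of recurrent states. Absorbing sets: for a map $\tilde w$ and nonempty $C$ with $\tilde w(C)\subset C$, a set $\Lambda\subset C$ is absorbing for $\tilde w$ in $C$ if for each $\tilde x\in C$ there is $N$ with $\tilde w^{\circ i}(\tilde x)\in\Lambda$ for all $i\ge N$. If the intersection of all absorbing sets for $\tilde w$ in $C$ is itself absorbing in $C$, it is the minimal absorbing set $\mathcal M[\tilde w,C]$ (and it is said to exist). Its components are the equivalence classes of the relation $\tilde x\sim\tilde y\iff\tilde w^{\circ j}(\tilde x)=\tilde w^{\circ l}(\tilde y)$ for some $j,l\in\mathbb N$; the basin of a component $\mathcal M_k$ is $\mathcal B[\mathcal M_k]=\{\tilde x\in C:\exists i\in\mathbb N,\ \tilde w^{\circ i}(\tilde x)\in\mathcal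 M_k\}$. *)

theory Defs
  imports "HOL-Analysis.Analysis" "HOL-Library.Extended_Nat"
begin

definition lattice :: "real \<Rightarrow> (real ^ 'n) set" where
  "lattice \<delta> = {x. \<forall>i. \<exists>m::int. x $ i = \<delta> * of_int m}"

definition is_DIFS :: "real \<Rightarrow> 'a set \<Rightarrow> nat \<Rightarrow> (nat \<Rightarrow> 'a \<Rightarrow> 'a) \<Rightarrow> (nat \<Rightarrow> 'a \<Rightarrow> real) \<Rightarrow> bool"
  where "is_DIFS \<delta> S N w p \<longleftrightarrow>
     (\<forall>i\<in>{1..N}. w i ` S \<subseteq> S) \<and>
     (\<forall>i\<in>{1..N}. \<forall>x\<in>S. 0 < p i x \<and> p i x \<le> 1) \<and>
     (\<forall>x\<in>S. (\<Sum>i=1..N. p i x) = 1)"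

definition trans_prob :: "nat \<Rightarrow> (nat \<Rightarrow> 'a \<Rightarrow> 'a) \<Rightarrow> (nat \<Rightarrow> 'a \<Rightarrow> real) \<Rightarrow> 'a \<Rightarrow> 'a \<Rightarrow> real"
  where "trans_prob N w p x y = (\<Sum>i=1..N. p i x * (if w i x = y then 1 else 0))"

fun nstep :: "nat \<Rightarrow> (nat \<Rightarrow> 'a \<Rightarrow> 'a) \<Rightarrow> (nat \<Rightarrow> 'a \<Rightarrow> real) \<Rightarrow> nat \<Rightarrow> 'a \<Rightarrow> 'a \<Rightarrow> real" where
  "nstep N w p 0 x y = (if x = y then 1 else 0)"
| "nstep N w p (Suc k) x y = (\<Sum>i=1..N. p i x * nstep N w p k (w i x) y)"

definition accessible :: "nat \<Rightarrow> (nat \<Rightarrow> 'a \<Rightarrow> 'a) \<Rightarrow> (nat \<Rightarrow> 'a \<Rightarrow> real) \<Rightarrow> 'a \<Rightarrow> 'a \<Rightarrow> bool"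
  where "accessible N w p x y \<longleftrightarrow> (\<exists>k\<ge>1. nstep N w p k x y > 0)"

text \<open>Probability that the chain started at x first hits y at step k (k >= 1).\<close>
fun first_hit :: "nat \<Rightarrow> (nat \<Rightarrow> 'a \<Rightarrow> 'a) \<Rightarrow> (nat \<Rightarrow> 'a \<Rightarrow> real) \<Rightarrow> nat \<Rightarrow> 'a \<Rightarrow> 'a \<Rightarrow> real" where
  "first_hit N w p 0 x y = 0"
| "first_hit N w p (Suc 0) x y = trans_prob N w p x y"
| "first_hit N w p (Suc (Suc k)) x y =
     (\<Sum>i=1..N. p i x * (if w i x = y then 0 else first_hit N w p (Suc k) (w i x) y))"

text \<open>Recurrent: the chain started at x returns to x in finitely many steps almost surely,
  i.e. the first-return probabilities sum to 1.\<close>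
definition recurrent :: "nat \<Rightarrow> (nat \<Rightarrow> 'a \<Rightarrow> 'a) \<Rightarrow> (nat \<Rightarrow> 'a \<Rightarrow> real) \<Rightarrow> 'a \<Rightarrow> bool"
  where "recurrent N w p x \<longleftrightarrow> (\<lambda>k. first_hit N w p k x x) sums 1"

definition mutually_accessible :: "nat \<Rightarrow> (nat \<Rightarrow> 'a \<Rightarrow> 'a) \<Rightarrow> (nat \<Rightarrow> 'a \<Rightarrow> real) \<Rightarrow> 'a set \<Rightarrow> bool"
  where "mutually_accessible N w p C \<longleftrightarrow> (\<forall>x\<in>C. \<forall>y\<in>C. accessible N w p x y)"

definition comm_class :: "'a set \<Rightarrow> nat \<Rightarrow> (nat \<Rightarrow> 'a \<Rightarrow> 'a) \<Rightarrow> (nat \<Rightarrow> 'a \<Rightarrow> real) \<Rightarrow> 'a set \<Rightarrow> bool"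
  where "comm_class S N w p C \<longleftrightarrow> C \<noteq> {} \<and> C \<subseteq> S \<and> mutually_accessible N w p C \<and>
           (\<forall>D. C \<subseteq> D \<and> D \<subseteq> S \<and> mutually_accessible N w p D \<longrightarrow> D = C)"

definition recurrent_classes :: "'a set \<Rightarrow> nat \<Rightarrow> (nat \<Rightarrow> 'a \<Rightarrow> 'a) \<Rightarrow> (nat \<Rightarrow> 'a \<Rightarrow> real) \<Rightarrow> 'a set set"
  where "recurrent_classes S N w p =
           {C. comm_class S N w p C \<and> (\<forall>x\<in>C. recurrent N w p x)}"

definition absorbing :: "('a \<Rightarrow> 'a) \<Rightarrow> 'a set \<Rightarrow> 'a set \<Rightarrow> bool"
  where "absorbing f C L \<longleftrightarrow> L \<subseteq> C \<and> (\<forall>x\<in>C. \<exists>M. \<forall>i\<ge>M. (f ^^ i) x \<in> L)"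

definition min_abs :: "('a \<Rightarrow> 'a) \<Rightarrow> 'a set \<Rightarrow> 'a set"
  where "min_abs f C = \<Inter> {L. absorbing f C L}"

definition min_abs_exists :: "('a \<Rightarrow> 'a) \<Rightarrow> 'a set \<Rightarrow> bool"
  where "min_abs_exists f C \<longleftrightarrow> absorbing f C (min_abs f C)"

definition comp_rel :: "('a \<Rightarrow> 'a) \<Rightarrow> 'a set \<Rightarrow> ('a \<times> 'a) set"
  where "comp_rel f M = {(x, y). x \<in> M \<and> y \<in> M \<and> (\<exists>j\<ge>1. \<exists>l\<ge>1. (f ^^ j) x = (f ^^ l) y)}"

definition components :: "('a \<Rightarrow> 'a) \<Rightarrow> 'a set \<Rightarrow> 'a set set"
  where "components f C = min_abs f C // comp_rel f (min_abs f C)"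

definition basin :: "('a \<Rightarrow> 'a) \<Rightarrow> 'a set \<Rightarrow> 'a set \<Rightarrow> 'a set"
  where "basin f C K = {x \<in> C. \<exists>i\<ge>1. (f ^^ i) x \<in> K}"

definition ecard :: "'a set \<Rightarrow> enat"
  where "ecard A = (if finite A then enat (card A) else \<infinity>)"

end

(*
  Every map w i keeps a recurrent class C invariant: from x in C the chain reaches w i x in one
  step, and recurrence of x forces w i x to lead back to x. For the latter, the probability h z
  of ever hitting x from z satisfies h z = (sum of p i z * (if w i z = x then 1 else h (w i z)))
  with h <= 1, so h z = 1 propagates along every path of positive probability, while h x = 1 is
  recurrence of x.

  Hence forward w i-orbits of points of C stay in C. If the minimal absorbing set of w i exists,
  such an orbit eventually enters it, so C meets a component of w i; two recurrent classes
  meeting the same component contain points whose orbits merge, so they intersect and coincide.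
  This injects recurrent classes into components, which is (a). Under the hypothesis of (b),
  every recurrent class meets the one component K, so there is at most one.
*)
theory Submission
  imports Defs
begin

lemma ecard_inj_on_le:
  assumes "inj_on g A" and "g ` A \<subseteq> B"
  shows "ecard A \<le> ecard B"
proof (cases "finite B")
  case True
  then have "finite A"
    using assms by (meson finite_imageD finite_subset)
  with True show ?thesis
    unfolding ecard_def using card_inj_on_le[OF assms True] by simp
qed (simp add: ecard_def)

lemma ecard_le_if_classes_meet:
  assumes meets: "\<And>C. C \<in> R \<Longrightarrow> \<exists>K\<in>F. C \<inter> K \<noteq> {}"
    and unique: "\<And>C C' K. C \<in> R \<Longrightarrow> C' \<in> R \<Longrightarrow> K \<in> F \<Longrightarrow>
      C \<inter> K \<noteq> {} \<Longrightarrow> C' \<inter> K \<noteq> {} \<Longrightarrow> C = C'"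
  shows "ecard R \<le> ecard F"
proof -
  define g where "g C = (SOME K. K \<in> F \<and> C \<inter> K \<noteq> {})" for C
  have g: "g C \<in> F \<and> C \<inter> g C \<noteq> {}" if "C \<in> R" for C
    unfolding g_def using meets[OF that] by (rule someI2_bex)
  have "inj_on g R"
  proof (rule inj_onI)
    fix C C' assume "C \<in> R" "C' \<in> R" "g C = g C'"
    then show "C = C'"
      using g[of C] g[of C'] unique[of C C' "g C"] by simp
  qed
  moreover have "g ` R \<subseteq> F"
    using g by blast
  ultimately show ?thesis
    by (rule ecard_inj_on_le)
qed

lemma components_orbits_meet:
  assumes "K \<in> components f C" and "x \<in> K" and "y \<in> K"
  shows "\<exists>j l. (f ^^ j) x = (f ^^ l) y"
proof -
  obtain a where "K = comp_rel f (min_abs f C) `` {a}"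
    using assms(1) unfolding components_def by (auto elim: quotientE)
  then obtain j1 l1 j2 l2 where x: "(f ^^ j1) a = (f ^^ l1) x" and y: "(f ^^ j2) a = (f ^^ l2) y"
    using assms(2,3) unfolding comp_rel_def by blast
  have "(f ^^ (j2 + l1)) x = (f ^^ (j2 + j1)) a"
    by (simp add: funpow_add x)
  also have "\<dots> = (f ^^ (j1 + l2)) y"
    by (simp add: funpow_add y add.commute[of j2 j1])
  finally show ?thesis
    by blast
qed

lemma min_abs_subset_Union_components: "min_abs f C \<subseteq> \<Union>(components f C)"
proof
  fix m assume m: "m \<in> min_abs f C"
  then have "(m, m) \<in> comp_rel f (min_abs f C)"
    unfolding comp_rel_def by (auto intro!: exI[of _ 1])
  moreover have "comp_rel f (min_abs f C) `` {m} \<in> components f C"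
    unfolding components_def using m by (rule quotientI)
  ultimately show "m \<in> \<Union>(components f C)"
    by blast
qed

lemma comm_class_maximal:
  "comm_class S N w p C \<Longrightarrow> C \<subseteq> D \<Longrightarrow> D \<subseteq> S \<Longrightarrow> mutually_accessible N w p D \<Longrightarrow> D = C"
  unfolding comm_class_def by blast

definition hitting_prob :: "nat \<Rightarrow> (nat \<Rightarrow> 'a \<Rightarrow> 'a) \<Rightarrow> (nat \<Rightarrow> 'a \<Rightarrow> real) \<Rightarrow> 'a \<Rightarrow> 'a \<Rightarrow> real"
  where "hitting_prob N w p x y = (\<Sum>k. first_hit N w p (Suc k) x y)"

lemma recurrent_imp_hitting_prob_eq_1:
  assumes "recurrent N w p x"
  shows "hitting_prob N w p x x = 1"
proof -
  have "(\<lambda>k. first_hit N w p (Suc k) x x) sums 1"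
    using assms sums_Suc_iff[of "\<lambda>k. first_hit N w p k x x" 1] unfolding recurrent_def by simp
  then show ?thesis
    unfolding hitting_prob_def by (rule sums_unique[symmetric])
qed

locale difs =
  fixes S :: "'a set" and N :: nat and w :: "nat \<Rightarrow> 'a \<Rightarrow> 'a" and p :: "nat \<Rightarrow> 'a \<Rightarrow> real"
  assumes maps_into: "i \<in> {1..N} \<Longrightarrow> x \<in> S \<Longrightarrow> w i x \<in> S"
    and prob_pos: "i \<in> {1..N} \<Longrightarrow> x \<in> S \<Longrightarrow> 0 < p i x"
    and prob_sum: "x \<in> S \<Longrightarrow> (\<Sum>i=1..N. p i x) = 1"

lemma difs_if_is_DIFS: "is_DIFS \<delta> S N w p \<Longrightarrow> difs S N w p"
  unfolding is_DIFS_def by unfold_locales blast+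

context difs
begin

lemma prob_nonneg: "i \<in> {1..N} \<Longrightarrow> x \<in> S \<Longrightarrow> 0 \<le> p i x"
  using prob_pos less_imp_le by blast

lemma nstep_nonneg: "x \<in> S \<Longrightarrow> 0 \<le> nstep N w p k x y"
  by (induction k arbitrary: x) (auto intro!: sum_nonneg simp: maps_into prob_nonneg)

lemma first_hit_nonneg: "x \<in> S \<Longrightarrow> 0 \<le> first_hit N w p k x y"
  by (induction k arbitrary: x rule: induct_nat_012)
     (auto intro!: sum_nonneg simp: trans_prob_def maps_into prob_nonneg)

lemma first_hit_le_nstep: "x \<in> S \<Longrightarrow> first_hit N w p k x y \<le> nstep N w p k x y"
proof (induction k arbitrary: x rule: induct_nat_012)
  case (ge2 k)
  have "first_hit N w p (Suc (Suc k)) x y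
      = (\<Sum>i=1..N. p i x * (if w i x = y then 0 else first_hit N w p (Suc k) (w i x) y))"
    by simp
  also have "\<dots> \<le> (\<Sum>i=1..N. p i x * nstep N w p (Suc k) (w i x) y)"
    using ge2 by (intro sum_mono mult_left_mono)
      (auto simp: maps_into prob_nonneg nstep_nonneg simp del: nstep.simps)
  also have "\<dots> = nstep N w p (Suc (Suc k)) x y"
    by simp
  finally show ?case .
qed (simp_all add: trans_prob_def)

lemma first_hit_partial_sum_Suc:
  "(\<Sum>k<Suc n. first_hit N w p (Suc k) x y) =
   (\<Sum>i=1..N. p i x * (if w i x = y then 1 else (\<Sum>k<n. first_hit N w p (Suc k) (w i x) y)))"
proof -
  have "(\<Sum>k<n. first_hit N w p (Suc (Suc k)) x y) =
      (\<Sum>i=1..N. \<Sum>k<n. p i x * (if w i x = y then 0 else first_hit N w p (Suc k) (w i x) y))"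
    by (simp only: first_hit.simps sum.swap[of _ "{..<n}"])
  also have "\<dots> =
      (\<Sum>i=1..N. p i x * (if w i x = y then 0 else (\<Sum>k<n. first_hit N w p (Suc k) (w i x) y)))"
    by (intro sum.cong refl) (simp add: sum_distrib_left)
  finally have later: "(\<Sum>k<n. first_hit N w p (Suc (Suc k)) x y) =
      (\<Sum>i=1..N. p i x * (if w i x = y then 0 else (\<Sum>k<n. first_hit N w p (Suc k) (w i x) y)))" .
  have "(\<Sum>k<Suc n. first_hit N w p (Suc k) x y)
      = first_hit N w p (Suc 0) x y + (\<Sum>k<n. first_hit N w p (Suc (Suc k)) x y)"
    by (simp only: sum.lessThan_Suc_shift)
  also have "\<dots> = (\<Sum>i=1..N. p i x * (if w i x = y then 1 else 0)) +
      (\<Sum>i=1..N. p i x * (if w i x = y then 0 else (\<Sum>k<n. first_hit N w p (Suc k) (w i x) y)))"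
    unfolding later by (simp only: first_hit.simps trans_prob_def)
  also have "\<dots> = (\<Sum>i=1..N. p i x * (if w i x = y then 1 else (\<Sum>k<n. first_hit N w p (Suc k) (w i x) y)))"
    by (simp add: sum.distrib[symmetric] distrib_left[symmetric] if_distrib cong: if_cong)
  finally show ?thesis .
qed

lemma first_hit_partial_sum_le_1: "x \<in> S \<Longrightarrow> (\<Sum>k<n. first_hit N w p (Suc k) x y) \<le> 1"
proof (induction n arbitrary: x)
  case (Suc n)
  have "(\<Sum>k<Suc n. first_hit N w p (Suc k) x y)
      = (\<Sum>i=1..N. p i x * (if w i x = y then 1 else (\<Sum>k<n. first_hit N w p (Suc k) (w i x) y)))"
    by (rule first_hit_partial_sum_Suc)
  also have "\<dots> \<le> (\<Sum>i=1..N. p i x * 1)"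
    using Suc by (intro sum_mono mult_left_mono) (auto simp: maps_into prob_nonneg)
  also have "\<dots> = 1"
    using prob_sum[OF Suc.prems] by simp
  finally show ?case .
qed simp

lemma summable_first_hit: "x \<in> S \<Longrightarrow> summable (\<lambda>k. first_hit N w p (Suc k) x y)"
  by (rule summableI_nonneg_bounded[of _ 1]) (simp_all add: first_hit_nonneg first_hit_partial_sum_le_1)

lemma partial_sums_tendsto_hitting_prob:
  "x \<in> S \<Longrightarrow> (\<lambda>n. \<Sum>k<n. first_hit N w p (Suc k) x y) \<longlonglongrightarrow> hitting_prob N w p x y"
  unfolding hitting_prob_def by (rule summable_LIMSEQ) (rule summable_first_hit)

lemma hitting_prob_le_1: "x \<in> S \<Longrightarrow> hitting_prob N w p x y \<le> 1"
  unfolding hitting_prob_def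
  by (rule suminf_le_const) (simp_all add: summable_first_hit first_hit_partial_sum_le_1)

lemma hitting_prob_step:
  assumes "x \<in> S"
  shows "hitting_prob N w p x y = (\<Sum>i=1..N. p i x * (if w i x = y then 1 else hitting_prob N w p (w i x) y))"
proof -
  have "(\<lambda>n. \<Sum>k<Suc n. first_hit N w p (Suc k) x y) \<longlonglongrightarrow> hitting_prob N w p x y"
    using partial_sums_tendsto_hitting_prob[OF assms] by (rule LIMSEQ_Suc)
  moreover have "(\<lambda>n. \<Sum>k<Suc n. first_hit N w p (Suc k) x y) \<longlonglongrightarrow>
      (\<Sum>i=1..N. p i x * (if w i x = y then 1 else hitting_prob N w p (w i x) y))"
    unfolding first_hit_partial_sum_Suc
  proof (intro tendsto_sum tendsto_mult_left)
    fix i assume "i \<in> {1..N}"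
    then show "(\<lambda>n. if w i x = y then 1 else \<Sum>k<n. first_hit N w p (Suc k) (w i x) y) \<longlonglongrightarrow>
        (if w i x = y then 1 else hitting_prob N w p (w i x) y)"
      using partial_sums_tendsto_hitting_prob[OF maps_into[OF _ assms]] by simp
  qed
  ultimately show ?thesis
    by (rule LIMSEQ_unique)
qed

lemma hitting_prob_successor_eq_1:
  assumes x: "x \<in> S" and hit: "hitting_prob N w p x y = 1"
    and i: "i \<in> {1..N}" and ne: "w i x \<noteq> y"
  shows "hitting_prob N w p (w i x) y = 1"
proof (rule ccontr)
  assume "hitting_prob N w p (w i x) y \<noteq> 1"
  then have lt: "hitting_prob N w p (w i x) y < 1"
    using hitting_prob_le_1[OF maps_into[OF i x], of y] by linarith
  have "hitting_prob N w p x y = (\<Sum>j=1..N. p j x * (if w j x = y then 1 else hitting_prob N w p (w j x) y))"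
    by (rule hitting_prob_step[OF x])
  also have "\<dots> < (\<Sum>j=1..N. p j x * 1)"
  proof (rule sum_strict_mono_ex1)
    show "\<forall>j\<in>{1..N}. p j x * (if w j x = y then 1 else hitting_prob N w p (w j x) y) \<le> p j x * 1"
      using x by (intro ballI mult_left_mono) (auto simp: prob_nonneg hitting_prob_le_1 maps_into)
    show "\<exists>j\<in>{1..N}. p j x * (if w j x = y then 1 else hitting_prob N w p (w j x) y) < p j x * 1"
      using i ne lt prob_pos[OF i x] by (intro bexI[of _ i]) auto
  qed simp
  also have "\<dots> = 1"
    using prob_sum[OF x] by simp
  finally show False
    using hit by simp
qed

lemma nstep_Suc_pos_imp_successor:
  assumes "x \<in> S" and "0 < nstep N w p (Suc k) x z"
  shows "\<exists>i\<in>{1..N}. 0 < nstep N w p k (w i x) z"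
proof (rule ccontr)
  assume "\<not> ?thesis"
  then have "(\<Sum>i=1..N. p i x * nstep N w p k (w i x) z) \<le> 0"
    using assms(1) by (intro sum_nonpos mult_nonneg_nonpos) (auto simp: prob_nonneg not_less)
  then show False
    using assms(2) by simp
qed

lemma nstep_pos_imp_hitting_prob_eq_1:
  assumes y: "hitting_prob N w p y y = 1"
  shows "x \<in> S \<Longrightarrow> hitting_prob N w p x y = 1 \<Longrightarrow> 0 < nstep N w p k x z
    \<Longrightarrow> z \<in> S \<and> hitting_prob N w p z y = 1"
proof (induction k arbitrary: x)
  case (Suc k)
  then obtain i where i: "i \<in> {1..N}" and pos: "0 < nstep N w p k (w i x) z"
    using nstep_Suc_pos_imp_successor by blast
  have "hitting_prob N w p (w i x) y = 1"
    using y hitting_prob_successor_eq_1[OF Suc.prems(1,2) i] by (cases "w i x = y") auto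
  then show ?case
    using Suc.IH[OF maps_into[OF i Suc.prems(1)] _ pos] by blast
qed (simp split: if_splits)

lemma hitting_prob_pos_imp_accessible:
  assumes x: "x \<in> S" and pos: "0 < hitting_prob N w p x y"
  shows "accessible N w p x y"
proof -
  obtain k where "first_hit N w p (Suc k) x y \<noteq> 0"
    using pos unfolding hitting_prob_def by force
  then have "0 < first_hit N w p (Suc k) x y"
    using first_hit_nonneg[OF x, of "Suc k" y] by simp
  also have "\<dots> \<le> nstep N w p (Suc k) x y"
    using x by (rule first_hit_le_nstep)
  finally have "0 < nstep N w p (Suc k) x y" .
  then show ?thesis
    unfolding accessible_def by (intro exI[of _ "Suc k"]) simp
qed

lemma recurrent_accessible_sym:
  assumes x: "x \<in> S" and "recurrent N w p x" and "accessible N w p x y"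
  shows "accessible N w p y x"
proof -
  have hx: "hitting_prob N w p x x = 1"
    using assms(2) by (rule recurrent_imp_hitting_prob_eq_1)
  obtain k where "0 < nstep N w p k x y"
    using assms(3) unfolding accessible_def by blast
  then have "y \<in> S" and "hitting_prob N w p y x = 1"
    using nstep_pos_imp_hitting_prob_eq_1[OF hx x hx] by auto
  then show ?thesis
    by (intro hitting_prob_pos_imp_accessible) simp_all
qed

lemma nstep_mult_le_nstep_add:
  "x \<in> S \<Longrightarrow> nstep N w p a x y * nstep N w p b y z \<le> nstep N w p (a + b) x z"
proof (induction a arbitrary: x)
  case (Suc a)
  have "nstep N w p (Suc a) x y * nstep N w p b y z
      = (\<Sum>i=1..N. p i x * (nstep N w p a (w i x) y * nstep N w p b y z))"
    by (simp add: sum_distrib_right mult.assoc)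
  also have "\<dots> \<le> (\<Sum>i=1..N. p i x * nstep N w p (a + b) (w i x) z)"
    using Suc by (intro sum_mono mult_left_mono) (auto simp: maps_into prob_nonneg)
  also have "\<dots> = nstep N w p (Suc a + b) x z"
    by simp
  finally show ?case .
qed (simp add: nstep_nonneg)

lemma accessible_trans:
  assumes "x \<in> S" and "accessible N w p x y" and "accessible N w p y z"
  shows "accessible N w p x z"
proof -
  obtain a b where a: "a \<ge> 1" "0 < nstep N w p a x y" and b: "0 < nstep N w p b y z"
    using assms(2,3) unfolding accessible_def by blast
  have "0 < nstep N w p a x y * nstep N w p b y z"
    using a b by simp
  also have "\<dots> \<le> nstep N w p (a + b) x z"
    using assms(1) by (rule nstep_mult_le_nstep_add)
  finally show ?thesis
    unfolding accessible_def using a by (intro exI[of _ "a + b"]) simp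
qed

lemma accessible_step:
  assumes i: "i \<in> {1..N}" and x: "x \<in> S"
  shows "accessible N w p x (w i x)"
proof -
  have "p i x \<le> (\<Sum>j=1..N. p j x * (if w j x = w i x then 1 else 0))"
    using member_le_sum[OF i, of "\<lambda>j. p j x * (if w j x = w i x then 1 else 0)"] x
    by (simp add: prob_nonneg)
  then have "0 < nstep N w p 1 x (w i x)"
    using prob_pos[OF i x] by simp
  then show ?thesis
    unfolding accessible_def by (intro exI[of _ 1]) simp
qed

lemma mutually_accessible_through:
  assumes "A \<subseteq> S"
    and "\<And>a. a \<in> A \<Longrightarrow> accessible N w p a z" and "\<And>b. b \<in> A \<Longrightarrow> accessible N w p z b"
  shows "mutually_accessible N w p A"
  unfolding mutually_accessible_def using assms by (meson accessible_trans subsetD)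

lemma comm_class_eq:
  assumes C: "comm_class S N w p C" and C': "comm_class S N w p C'" and z: "z \<in> C" "z \<in> C'"
  shows "C = C'"
proof -
  have "C \<union> C' \<subseteq> S" and "mutually_accessible N w p C" and "mutually_accessible N w p C'"
    using C C' unfolding comm_class_def by auto
  then have "mutually_accessible N w p (C \<union> C')"
    using z unfolding mutually_accessible_def[of _ _ _ C] mutually_accessible_def[of _ _ _ C']
    by (intro mutually_accessible_through[where z = z]) auto
  then have "C \<union> C' = C" and "C \<union> C' = C'"
    using comm_class_maximal[OF C, of "C \<union> C'"] comm_class_maximal[OF C', of "C \<union> C'"] \<open>C \<union> C' \<subseteq> S\<close>
    by auto
  then show ?thesis
    by simp
qed

lemma recurrent_class_closed:
  assumes C: "C \<in> recurrent_classes S N w p" and x: "x \<in> C" and i: "i \<in> {1..N}"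
  shows "w i x \<in> C"
proof -
  have cls: "comm_class S N w p C" and rec: "recurrent N w p x"
    using C x unfolding recurrent_classes_def by auto
  then have CS: "C \<subseteq> S" and mut: "mutually_accessible N w p C"
    unfolding comm_class_def by auto
  with x have xS: "x \<in> S" by blast
  have to_image: "accessible N w p x (w i x)"
    using i xS by (rule accessible_step)
  have from_image: "accessible N w p (w i x) x"
    using xS rec to_image by (rule recurrent_accessible_sym)
  have "mutually_accessible N w p (insert (w i x) C)"
    using CS mut x to_image from_image maps_into[OF i xS] unfolding mutually_accessible_def[of _ _ _ C]
    by (intro mutually_accessible_through[where z = x]) auto
  then have "insert (w i x) C = C"
    using cls CS maps_into[OF i xS] by (intro comm_class_maximal) auto
  then show ?thesis
    by blast
qed

lemma recurrent_class_funpow_closed: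
  "C \<in> recurrent_classes S N w p \<Longrightarrow> x \<in> C \<Longrightarrow> i \<in> {1..N} \<Longrightarrow> (w i ^^ n) x \<in> C"
  by (induction n) (auto intro: recurrent_class_closed)

lemma recurrent_class_meets_min_abs:
  assumes C: "C \<in> recurrent_classes S N w p" and i: "i \<in> {1..N}" and ex: "min_abs_exists (w i) S"
  shows "C \<inter> min_abs (w i) S \<noteq> {}"
proof -
  obtain x where x: "x \<in> C" "x \<in> S"
    using C unfolding recurrent_classes_def comm_class_def by blast
  then obtain n where "(w i ^^ n) x \<in> min_abs (w i) S"
    using ex unfolding min_abs_exists_def absorbing_def by blast
  moreover have "(w i ^^ n) x \<in> C"
    using C x(1) i by (rule recurrent_class_funpow_closed)
  ultimately show ?thesis
    by blast
qed

lemma recurrent_class_meets_component: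
  assumes "C \<in> recurrent_classes S N w p" and "i \<in> {1..N}" and "min_abs_exists (w i) S"
  shows "\<exists>K\<in>components (w i) S. C \<inter> K \<noteq> {}"
  using recurrent_class_meets_min_abs[OF assms] min_abs_subset_Union_components[of "w i" S] by blast

lemma recurrent_classes_eq_if_meet_component:
  assumes C: "C \<in> recurrent_classes S N w p" and C': "C' \<in> recurrent_classes S N w p"
    and i: "i \<in> {1..N}" and K: "K \<in> components (w i) S"
    and "C \<inter> K \<noteq> {}" and "C' \<inter> K \<noteq> {}"
  shows "C = C'"
proof -
  obtain x x' where x: "x \<in> C" "x \<in> K" and x': "x' \<in> C'" "x' \<in> K"
    using assms(5,6) by blast
  then obtain j l where meet: "(w i ^^ j) x = (w i ^^ l) x'"
    using components_orbits_meet[OF K] by blast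
  have "comm_class S N w p C" and "comm_class S N w p C'"
    using C C' unfolding recurrent_classes_def by auto
  moreover have "(w i ^^ j) x \<in> C"
    using C x(1) i by (rule recurrent_class_funpow_closed)
  moreover have "(w i ^^ j) x \<in> C'"
    unfolding meet using C' x'(1) i by (rule recurrent_class_funpow_closed)
  ultimately show ?thesis
    by (rule comm_class_eq)
qed

lemma ecard_recurrent_classes_le_components:
  assumes i: "i \<in> {1..N}" and ex: "min_abs_exists (w i) S"
  shows "ecard (recurrent_classes S N w p) \<le> ecard (components (w i) S)"
  by (rule ecard_le_if_classes_meet[OF recurrent_class_meets_component[OF _ i ex]
        recurrent_classes_eq_if_meet_component[OF _ _ i]])

lemma recurrent_class_meets_basin_component:
  assumes C: "C \<in> recurrent_classes S N w p" and i: "i \<in> {1..N}" and ex: "min_abs_exists (w i) S"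
    and j: "j \<in> {1..N}" and sub: "min_abs (w i) S \<subseteq> basin (w j) S K"
  shows "C \<inter> K \<noteq> {}"
proof -
  obtain m where "m \<in> C" and "m \<in> min_abs (w i) S"
    using recurrent_class_meets_min_abs[OF C i ex] by blast
  moreover from this(2) obtain n where "(w j ^^ n) m \<in> K"
    using sub unfolding basin_def by blast
  ultimately show ?thesis
    using recurrent_class_funpow_closed[OF C _ j] by blast
qed

lemma ecard_recurrent_classes_le_1:
  assumes j: "j \<in> {1..N}" and K: "K \<in> components (w j) S"
    and meets: "\<And>C. C \<in> recurrent_classes S N w p \<Longrightarrow> C \<inter> K \<noteq> {}"
  shows "ecard (recurrent_classes S N w p) \<le> 1"
proof -
  have "ecard (recurrent_classes S N w p) \<le> ecard {K}"
  proof (rule ecard_le_if_classes_meet)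
    show "\<exists>K'\<in>{K}. C \<inter> K' \<noteq> {}" if "C \<in> recurrent_classes S N w p" for C
      using meets[OF that] by blast
    show "C = C'"
      if "C \<in> recurrent_classes S N w p" "C' \<in> recurrent_classes S N w p" "K' \<in> {K}"
        "C \<inter> K' \<noteq> {}" "C' \<inter> K' \<noteq> {}" for C C' K'
      using that recurrent_classes_eq_if_meet_component[OF _ _ j K] by blast
  qed
  then show ?thesis
    by (simp add: ecard_def one_enat_def)
qed

end

theorem theorem12:
  fixes \<delta> :: real and S :: "(real ^ 'n) set" and N :: nat
    and w :: "nat \<Rightarrow> real ^ 'n \<Rightarrow> real ^ 'n" and p :: "nat \<Rightarrow> real ^ 'n \<Rightarrow> real"
    and I :: "nat set"
  assumes "\<delta> > 0" and "S \<subseteq> lattice \<delta>"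
    and "is_DIFS \<delta> S N w p"
    and "I = {i \<in> {1..N}. min_abs_exists (w i) S}"
    and "I \<noteq> {}"
  shows "ecard (recurrent_classes S N w p) \<le> (INF i\<in>I. ecard (components (w i) S)) \<and>
         ((\<exists>i\<in>I. \<exists>j\<in>I. \<exists>K\<in>components (w j) S. min_abs (w i) S \<subseteq> basin (w j) S K)
           \<longrightarrow> ecard (recurrent_classes S N w p) \<le> 1)"
proof -
  interpret difs S N w p
    using assms(3) by (rule difs_if_is_DIFS)
  have "ecard (recurrent_classes S N w p) \<le> (INF i\<in>I. ecard (components (w i) S))"
    using assms(4) by (auto intro!: INF_greatest ecard_recurrent_classes_le_components)
  moreover have "ecard (recurrent_classes S N w p) \<le> 1"
    if i: "i \<in> I" and j: "j \<in> I" and K: "K \<in> components (w j) S"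
      and sub: "min_abs (w i) S \<subseteq> basin (w j) S K" for i j K
  proof (rule ecard_recurrent_classes_le_1[OF _ K])
    show "j \<in> {1..N}"
      using j assms(4) by simp
    show "C \<inter> K \<noteq> {}" if "C \<in> recurrent_classes S N w p" for C
      using that i j sub assms(4) by (intro recurrent_class_meets_basin_component[of C i j]) auto
  qed
  ultimately show ?thesis
    by blast
qed

end
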